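(* Let $n\ge1$ be an integer and $x\in\{0,1,\dots,n\}$ an observed value of $X\sim B(n,p)$. For $\alpha\in(0,1)$ let the prior of $p$ be the triangle distribution with mode $\alpha$, $$\pi(p)=\begin{cases}\frac{2}{\alpha}p, & 0<p\le\alpha,\\ \frac{2}{1-\alpha}(1-p), & \alpha<p<1,\end{cases}$$ and let $g(\alpha)$ be the corresponding posterior mean of $p$: $$g(\alpha)=\frac{\frac{2}{\alpha}\int_0^\alpha p^{x+2}(1-p)^{n-x}\,dp+\frac{2}{1-\alpha}\int_\alpha^1 p^{x+1}(1-p)^{n-x+1}\,dp}{\frac{2}{\alpha}\int_0^\alpha p^{x+1}(1-p)^{n-x}\,dp+\frac{2}{1-\alpha}\int_\alpha^1 p^{x}(1-p)^{n-x+1}\,dp}.$$ Then the iterative limit obtained by replacing the mode $\alpha$ of the prior with the posterior mean on every iteration, namely a point $\tau\in(0,1)$ with $g(\tau)=\tau$, exists and is unique.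
   Context: $B(n,p)$ is the binomial distribution with $n$ trials and success probability $p\in(0,1)$. The iterative limit (iterative Bayes estimate) is by definition a value $\tau\in(0,1)$ at which the prior mode coincides with the posterior mean, i.e. $g(\tau)=\tau$. *)

theory Defs
  imports "HOL-Analysis.Analysis"
begin

definition tri_post_mean :: "nat \<Rightarrow> nat \<Rightarrow> real \<Rightarrow> real" where
  "tri_post_mean n x \<alpha> =
     ((2 / \<alpha>) * integral {0..\<alpha>} (\<lambda>p. p ^ (x + 2) * (1 - p) ^ (n - x))
      + (2 / (1 - \<alpha>)) * integral {\<alpha>..1} (\<lambda>p. p ^ (x + 1) * (1 - p) ^ (n - x + 1)))
     / ((2 / \<alpha>) * integral {0..\<alpha>} (\<lambda>p. p ^ (x + 1) * (1 - p) ^ (n - x))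
      + (2 / (1 - \<alpha>)) * integral {\<alpha>..1} (\<lambda>p. p ^ x * (1 - p) ^ (n - x + 1)))"

end

theory Submission
  imports Defs
begin

text \<open>Write \<open>w(p) = p\<^sup>x (1 - p)\<^sup>n\<^sup>-\<^sup>x\<close> and \<open>M\<^sub>j(t) = \<integral>\<^sub>0\<^sup>t p\<^sup>j w(p) dp\<close>. Multiplying the
  equation \<open>g(t) = t\<close> by \<open>t(1 - t)/2\<close> turns it into \<open>K(t) = 0\<close> for the explicit function
  \<open>K(t) = M\<^sub>2(t) - 2t M\<^sub>1(t) + t\<^sup>2 M\<^sub>0(t) + a t - b t\<^sup>2\<close>, where \<open>a = \<integral>\<^sub>0\<^sup>1 p(1 - p)w\<close> and
  \<open>b = \<integral>\<^sub>0\<^sup>1 (1 - p)w\<close>. Now \<open>K(0) = K(1) = 0\<close>, \<open>K'(0) = K'(1) = a > 0\<close>, so \<open>K\<close> has a zero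
  in \<open>(0,1)\<close>; and \<open>K'' = 2M\<^sub>0 - 2b\<close> is strictly increasing, so by Rolle's theorem \<open>K\<close> has
  at most three zeros in \<open>[0,1]\<close>, i.e. at most one in \<open>(0,1)\<close>. Only continuity of \<open>w\<close>
  on \<open>[0,1]\<close> and positivity on \<open>(0,1)\<close> are used.\<close>

lemma Rolle_within_Icc:
  fixes h h' :: "real \<Rightarrow> real"
  assumes deriv: "\<And>t. t \<in> {a..b} \<Longrightarrow> (h has_real_derivative h' t) (at t within {a..b})"
    and "a \<le> u" "u < v" "v \<le> b" "h u = h v"
  shows "\<exists>z. u < z \<and> z < v \<and> h' z = 0"
proof -
  have "continuous_on {u..v} h"
    using DERIV_continuous_on[OF deriv] by (rule continuous_on_subset) (use assms in auto)
  moreover have D: "DERIV h z :> h' z" if "u < z" "z < v" for z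
    using deriv[of z] at_within_Icc_at[of a z b] that assms by auto
  ultimately obtain z where "u < z" "z < v" "DERIV h z :> 0"
    using Rolle[OF \<open>u < v\<close> \<open>h u = h v\<close>] real_differentiable_def by blast
  then show ?thesis using D DERIV_unique by blast
qed

lemma no_four_zeros_if_inj_second_deriv:
  fixes h h' h'' :: "real \<Rightarrow> real"
  assumes D1: "\<And>t. t \<in> {a..b} \<Longrightarrow> (h has_real_derivative h' t) (at t within {a..b})"
    and D2: "\<And>t. t \<in> {a..b} \<Longrightarrow> (h' has_real_derivative h'' t) (at t within {a..b})"
    and inj: "inj_on h'' {a..b}"
    and s: "a \<le> s0" "s0 < s1" "s1 < s2" "s2 < s3" "s3 \<le> b"
    and zeros: "h s0 = 0" "h s1 = 0" "h s2 = 0" "h s3 = 0"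
  shows False
proof -
  obtain c1 where c1: "s0 < c1" "c1 < s1" "h' c1 = 0"
    using Rolle_within_Icc[OF D1, of s0 s1] s zeros by auto
  obtain c2 where c2: "s1 < c2" "c2 < s2" "h' c2 = 0"
    using Rolle_within_Icc[OF D1, of s1 s2] s zeros by auto
  obtain c3 where c3: "s2 < c3" "c3 < s3" "h' c3 = 0"
    using Rolle_within_Icc[OF D1, of s2 s3] s zeros by auto
  obtain d1 where d1: "c1 < d1" "d1 < c2" "h'' d1 = 0"
    using Rolle_within_Icc[OF D2, of c1 c2] s c1 c2 by auto
  obtain d2 where d2: "c2 < d2" "d2 < c3" "h'' d2 = 0"
    using Rolle_within_Icc[OF D2, of c2 c3] s c2 c3 by auto
  have "d1 = d2"
    using inj_onD[OF inj, of d1 d2] d1 d2 c1 c3 s by auto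
  with d1 d2 show False by simp
qed

lemma zero_between_zeros_with_pos_deriv:
  fixes h h' :: "real \<Rightarrow> real"
  assumes deriv: "\<And>t. t \<in> {a..b} \<Longrightarrow> (h has_real_derivative h' t) (at t within {a..b})"
    and "a < b" "h a = 0" "h b = 0" "h' a > 0" "h' b > 0"
  shows "\<exists>z. a < z \<and> z < b \<and> h z = 0"
proof -
  have "(h has_real_derivative h' a) (at a within {a..b})"
    and "(h has_real_derivative h' b) (at b within {a..b})"
    using deriv \<open>a < b\<close> by auto
  then obtain d e where "d > 0" "e > 0"
    and d: "\<forall>\<delta>>0. a + \<delta> \<in> {a..b} \<longrightarrow> \<delta> < d \<longrightarrow> h a < h (a + \<delta>)"
    and e: "\<forall>\<delta>>0. b - \<delta> \<in> {a..b} \<longrightarrow> \<delta> < e \<longrightarrow> h (b - \<delta>) < h b"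
    using has_real_derivative_pos_inc_right has_real_derivative_pos_inc_left \<open>h' a > 0\<close> \<open>h' b > 0\<close>
    by metis
  define \<delta> where "\<delta> = min (min d e) (b - a) / 2"
  have \<delta>: "0 < \<delta>" "\<delta> < d" "\<delta> < e" "a + \<delta> \<le> b - \<delta>"
    using \<open>d > 0\<close> \<open>e > 0\<close> \<open>a < b\<close> by (auto simp: \<delta>_def)
  have "h (a + \<delta>) > 0" "h (b - \<delta>) < 0"
    using d e \<delta> assms by auto
  moreover have "continuous_on {a + \<delta>..b - \<delta>} h"
    using DERIV_continuous_on[OF deriv] by (rule continuous_on_subset) (use \<delta> in auto)
  ultimately obtain z where "a + \<delta> \<le> z" "z \<le> b - \<delta>" "h z = 0"
    using IVT2'[of h "b - \<delta>" 0 "a + \<delta>"] \<delta> by auto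
  with \<delta> show ?thesis by (intro exI[of _ z]) auto
qed

lemma integral_pos_if_continuous_pos:
  fixes g :: "real \<Rightarrow> real"
  assumes cont: "continuous_on {u..v} g" and "u < v" and pos: "\<And>p. u < p \<Longrightarrow> p < v \<Longrightarrow> g p > 0"
  shows "integral {u..v} g > 0"
proof -
  have D: "((\<lambda>t. integral {u..t} g) has_real_derivative g t) (at t within {u..v})"
    if "t \<in> {u..v}" for t
    using integral_has_real_derivative[OF cont that] .
  have "\<exists>y. ((\<lambda>t. integral {u..t} g) has_real_derivative y) (at t) \<and> y > 0"
    if "u < t" "t < v" for t
    using D[of t] at_within_Icc_at[of u t v] pos[of t] that by auto
  moreover have "continuous_on {u..v} (\<lambda>t. integral {u..t} g)"
    using D by (rule DERIV_continuous_on)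
  ultimately have "integral {u..u} g < integral {u..v} g"
    by (rule DERIV_pos_imp_increasing_open[OF \<open>u < v\<close>])
  then show ?thesis by simp
qed

definition tri_posterior_mean :: "(real \<Rightarrow> real) \<Rightarrow> real \<Rightarrow> real" where
  "tri_posterior_mean w \<alpha> =
     ((2 / \<alpha>) * integral {0..\<alpha>} (\<lambda>p. p ^ 2 * w p)
      + (2 / (1 - \<alpha>)) * integral {\<alpha>..1} (\<lambda>p. p * (1 - p) * w p))
     / ((2 / \<alpha>) * integral {0..\<alpha>} (\<lambda>p. p * w p)
      + (2 / (1 - \<alpha>)) * integral {\<alpha>..1} (\<lambda>p. (1 - p) * w p))"

lemma tri_post_mean_eq_tri_posterior_mean:
  "tri_post_mean n x = tri_posterior_mean (\<lambda>p. p ^ x * (1 - p) ^ (n - x))"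
proof -
  have eqs: "(\<lambda>p::real. p ^ (x + 2) * (1 - p) ^ (n - x)) = (\<lambda>p. p\<^sup>2 * (p ^ x * (1 - p) ^ (n - x)))"
    "(\<lambda>p::real. p ^ (x + 1) * (1 - p) ^ (n - x + 1)) = (\<lambda>p. p * (1 - p) * (p ^ x * (1 - p) ^ (n - x)))"
    "(\<lambda>p::real. p ^ (x + 1) * (1 - p) ^ (n - x)) = (\<lambda>p. p * (p ^ x * (1 - p) ^ (n - x)))"
    "(\<lambda>p::real. p ^ x * (1 - p) ^ (n - x + 1)) = (\<lambda>p. (1 - p) * (p ^ x * (1 - p) ^ (n - x)))"
    by (simp_all add: fun_eq_iff power_add power2_eq_square mult_ac)
  show ?thesis
    by (rule ext) (simp only: tri_post_mean_def tri_posterior_mean_def eqs)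
qed

locale unit_interval_likelihood =
  fixes w :: "real \<Rightarrow> real"
  assumes continuous: "continuous_on {0..1} w"
    and positive: "\<And>p. 0 < p \<Longrightarrow> p < 1 \<Longrightarrow> w p > 0"
begin

definition moment :: "nat \<Rightarrow> real \<Rightarrow> real" where
  "moment j t = integral {0..t} (\<lambda>p. p ^ j * w p)"

lemma continuous_on_moment_integrand: "continuous_on S (\<lambda>p. p ^ j * w p)" if "S \<subseteq> {0..1}"
  using continuous_on_subset[OF continuous that] by (intro continuous_intros)

lemma has_real_derivative_moment:
  "t \<in> {0..1} \<Longrightarrow> (moment j has_real_derivative t ^ j * w t) (at t within {0..1})"
  unfolding moment_def
  by (rule integral_has_real_derivative[OF continuous_on_moment_integrand]) auto

lemma moment_zero [simp]: "moment j 0 = 0"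
  by (simp add: moment_def)

lemma moment_diff:
  assumes "0 \<le> u" "u \<le> v" "v \<le> 1"
  shows "moment j v - moment j u = integral {u..v} (\<lambda>p. p ^ j * w p)"
  using Henstock_Kurzweil_Integration.integral_combine[OF assms(1,2)
      integrable_continuous_interval[OF continuous_on_moment_integrand]] assms
  by (simp add: moment_def algebra_simps)

lemma integral_weighted_pos:
  assumes "0 \<le> u" "u < v" "v \<le> 1" "\<And>p. u < p \<Longrightarrow> p < v \<Longrightarrow> c p > 0"
    and "continuous_on {u..v} c"
  shows "integral {u..v} (\<lambda>p. c p * w p) > 0"
  using assms positive
  by (intro integral_pos_if_continuous_pos continuous_on_mult
      continuous_on_subset[OF continuous]) auto

lemma moment_strict_mono:
  assumes "0 \<le> u" "u < v" "v \<le> 1"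
  shows "moment j u < moment j v"
proof -
  have "continuous_on {u..v} (\<lambda>p. p ^ j)" by (intro continuous_intros)
  then show ?thesis
    using integral_weighted_pos[of u v "\<lambda>p. p ^ j"] moment_diff[of u v j] assms
    by auto
qed

lemma integral_linear_weight:
  assumes "0 \<le> u" "u \<le> v" "v \<le> 1"
  shows "integral {u..v} (\<lambda>p. (1 - p) * w p) = (moment 0 v - moment 0 u) - (moment 1 v - moment 1 u)"
proof -
  have int: "(\<lambda>p. p ^ j * w p) integrable_on {u..v}" for j
    using assms by (intro integrable_continuous_interval continuous_on_moment_integrand) auto
  have "integral {u..v} (\<lambda>p. (1 - p) * w p) = integral {u..v} (\<lambda>p. p ^ 0 * w p - p ^ 1 * w p)"
    by (simp add: left_diff_distrib)
  also have "\<dots> = integral {u..v} (\<lambda>p. p ^ 0 * w p) - integral {u..v} (\<lambda>p. p ^ 1 * w p)"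
    by (rule integral_diff[OF int int])
  finally show ?thesis
    using moment_diff[OF assms, of 0] moment_diff[OF assms, of 1] by simp
qed

lemma integral_quadratic_weight:
  assumes "0 \<le> u" "u \<le> v" "v \<le> 1"
  shows "integral {u..v} (\<lambda>p. p * (1 - p) * w p) = (moment 1 v - moment 1 u) - (moment 2 v - moment 2 u)"
proof -
  have int: "(\<lambda>p. p ^ j * w p) integrable_on {u..v}" for j
    using assms by (intro integrable_continuous_interval continuous_on_moment_integrand) auto
  have "integral {u..v} (\<lambda>p. p * (1 - p) * w p) = integral {u..v} (\<lambda>p. p ^ 1 * w p - p ^ 2 * w p)"
    by (simp add: algebra_simps power2_eq_square)
  also have "\<dots> = integral {u..v} (\<lambda>p. p ^ 1 * w p) - integral {u..v} (\<lambda>p. p ^ 2 * w p)"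
    by (rule integral_diff[OF int int])
  finally show ?thesis
    using moment_diff[OF assms, of 1] moment_diff[OF assms, of 2] by simp
qed

lemma integral_linear_weight_pos:
  assumes "0 \<le> u" "u < v" "v \<le> 1"
  shows "integral {u..v} (\<lambda>p. (1 - p) * w p) > 0"
proof (rule integral_weighted_pos[OF assms])
  show "continuous_on {u..v} (\<lambda>p. 1 - p)" by (intro continuous_intros)
qed (use assms in auto)

lemma integral_quadratic_weight_pos:
  assumes "0 \<le> u" "u < v" "v \<le> 1"
  shows "integral {u..v} (\<lambda>p. p * (1 - p) * w p) > 0"
proof (rule integral_weighted_pos[OF assms])
  show "continuous_on {u..v} (\<lambda>p. p * (1 - p))" by (intro continuous_intros)
qed (use assms in auto)

definition fixed_point_gap :: "real \<Rightarrow> real" where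
  "fixed_point_gap t = moment 2 t - 2 * t * moment 1 t + t\<^sup>2 * moment 0 t
     + (moment 1 1 - moment 2 1) * t - (moment 0 1 - moment 1 1) * t\<^sup>2"

lemma fixed_point_gap_0: "fixed_point_gap 0 = 0"
  and fixed_point_gap_1: "fixed_point_gap 1 = 0"
  by (simp_all add: fixed_point_gap_def)

lemma has_real_derivative_fixed_point_gap:
  assumes "t \<in> {0..1}"
  shows "(fixed_point_gap has_real_derivative
      2 * t * moment 0 t - 2 * moment 1 t + (moment 1 1 - moment 2 1) - 2 * (moment 0 1 - moment 1 1) * t)
    (at t within {0..1})"
  unfolding fixed_point_gap_def[abs_def]
  by (rule derivative_eq_intros has_real_derivative_moment[OF assms] refl)+
    (simp add: algebra_simps power2_eq_square)

lemma has_real_derivative_fixed_point_gap_deriv: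
  assumes "t \<in> {0..1}"
  shows "((\<lambda>t. 2 * t * moment 0 t - 2 * moment 1 t + (moment 1 1 - moment 2 1) - 2 * (moment 0 1 - moment 1 1) * t)
      has_real_derivative 2 * moment 0 t - 2 * (moment 0 1 - moment 1 1)) (at t within {0..1})"
  by (rule derivative_eq_intros has_real_derivative_moment[OF assms] refl)+
    (simp add: algebra_simps)

lemma tri_posterior_mean_eq_self_iff:
  assumes t: "0 < t" "t < 1"
  shows "tri_posterior_mean w t = t \<longleftrightarrow> fixed_point_gap t = 0"
proof -
  define N where "N = 2 / t * moment 2 t
    + 2 / (1 - t) * ((moment 1 1 - moment 1 t) - (moment 2 1 - moment 2 t))"
  define D where "D = 2 / t * moment 1 t
    + 2 / (1 - t) * ((moment 0 1 - moment 0 t) - (moment 1 1 - moment 1 t))"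
  have "tri_posterior_mean w t = N / D"
    using integral_linear_weight[of t 1] integral_quadratic_weight[of t 1] t
    by (simp add: tri_posterior_mean_def N_def D_def moment_def)
  moreover have "D > 0"
    using moment_strict_mono[of 0 t 1] integral_linear_weight_pos[of t 1] integral_linear_weight[of t 1] t
    by (simp add: D_def add_pos_pos)
  moreover have "t * (1 - t) / 2 * (N - t * D) = fixed_point_gap t"
  proof -
    have clear: "t * (1 - t) / 2 * ((2 / t * A + 2 / (1 - t) * B) - t * (2 / t * C + 2 / (1 - t) * E))
        = (1 - t) * A + t * B - t * (1 - t) * C - t\<^sup>2 * E" for A B C E
      using t by (simp add: divide_simps power2_eq_square) argo
    show ?thesis
      unfolding N_def D_def clear fixed_point_gap_def by (simp add: algebra_simps power2_eq_square)
  qed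
  ultimately show ?thesis
    using t by (auto simp: divide_eq_eq)
qed

theorem tri_posterior_mean_unique_fixed_point:
  "\<exists>!\<tau>. 0 < \<tau> \<and> \<tau> < 1 \<and> tri_posterior_mean w \<tau> = \<tau>"
proof -
  define a where "a = moment 1 1 - moment 2 1"
  define b where "b = moment 0 1 - moment 1 1"
  define gap' where "gap' t = 2 * t * moment 0 t - 2 * moment 1 t + a - 2 * b * t" for t
  define gap'' where "gap'' t = 2 * moment 0 t - 2 * b" for t
  have D1: "(fixed_point_gap has_real_derivative gap' t) (at t within {0..1})" if "t \<in> {0..1}" for t
    using has_real_derivative_fixed_point_gap[OF that] by (simp add: gap'_def a_def b_def mult_ac)
  have D2: "(gap' has_real_derivative gap'' t) (at t within {0..1})" if "t \<in> {0..1}" for t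
    using has_real_derivative_fixed_point_gap_deriv[OF that]
    by (simp add: gap'_def[abs_def] gap''_def a_def b_def mult_ac)
  have "strict_mono_on {0..1} gap''"
    by (rule strict_mono_onI) (auto simp: gap''_def intro: moment_strict_mono)
  then have inj: "inj_on gap'' {0..1}"
    by (rule strict_mono_on_imp_inj_on)
  have "a > 0"
    using integral_quadratic_weight_pos[of 0 1] integral_quadratic_weight[of 0 1] by (simp add: a_def)
  then have "gap' 0 > 0" "gap' 1 > 0"
    by (simp_all add: gap'_def b_def)
  then have "\<exists>\<tau>. 0 < \<tau> \<and> \<tau> < 1 \<and> fixed_point_gap \<tau> = 0"
    using zero_between_zeros_with_pos_deriv[OF D1] fixed_point_gap_0 fixed_point_gap_1 by simp
  moreover have "\<not> (0 < s \<and> s < t \<and> t < 1 \<and> fixed_point_gap s = 0 \<and> fixed_point_gap t = 0)" for s t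
    using no_four_zeros_if_inj_second_deriv[OF D1 D2 inj, of 0 s t 1] fixed_point_gap_0 fixed_point_gap_1
    by auto
  ultimately show ?thesis
    using tri_posterior_mean_eq_self_iff by (metis linorder_neqE_linordered_idom)
qed

end

theorem theorem2:
  fixes n x :: nat
  assumes "n \<ge> 1" and "x \<le> n"
  shows "\<exists>!\<tau>::real. 0 < \<tau> \<and> \<tau> < 1 \<and> tri_post_mean n x \<tau> = \<tau>"
proof -
  interpret unit_interval_likelihood "\<lambda>p. p ^ x * (1 - p) ^ (n - x)"
    by unfold_locales (auto intro!: continuous_intros)
  show ?thesis
    unfolding tri_post_mean_eq_tri_posterior_mean by (rule tri_posterior_mean_unique_fixed_point)
qed

end
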